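(* Let $X$ be a countably cellular Tychonoff space and $\mathcal M$ the $\sigma$-ideal of meager subsets of $X$. Then (1) every meager subset of $X$ is contained in a meager functionally Borel subset of $X$; (2) every family of pairwise disjoint nonmeager Borel subsets of $X$ is countable; (3) $\mathcal{B}o^\pm\mathcal M=\mathcal{B}a^\pm\mathcal M$, and this $\sigma$-algebra equals the $\sigma$-algebra of subsets of $X$ having the Baire Property.
   Context: A space is countably cellular if every family of pairwise disjoint open sets is countable. A subset $A\subseteq X$ is functionally Borel if $A=f^{-1}[B]$ for a continuous $f:X\to\mathbb R^\omega$ and Borel $B\subseteq\mathbb R^\omega$. $\mathcal{B}o$ and $\mathcal{B}a$ denote the $\sigma$-algebras of Borel and functionally Borel subsets of $X$, and $\mathcal A^\pm\mathcal M$ is the smallest $\sigma$-algebra containing $\mathcal A\cup\mathcal M$. A set has the Baire Property if it belongs to the smallest $\sigma$-algebra containing all open and all meager sets. *)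

theory Defs
  imports "HOL-Analysis.Analysis"
begin

definition tychonoff_space :: "'a topology \<Rightarrow> bool" where
  "tychonoff_space X \<longleftrightarrow> completely_regular_space X \<and> t1_space X"

definition countably_cellular :: "'a topology \<Rightarrow> bool" where
  "countably_cellular X \<longleftrightarrow>
     (\<forall>\<U>. (\<forall>U\<in>\<U>. openin X U) \<and> pairwise disjnt \<U> \<longrightarrow> countable \<U>)"

definition nowhere_dense_in :: "'a topology \<Rightarrow> 'a set \<Rightarrow> bool" where
  "nowhere_dense_in X S \<longleftrightarrow> S \<subseteq> topspace X \<and> X interior_of (X closure_of S) = {}"

definition meager_in :: "'a topology \<Rightarrow> 'a set \<Rightarrow> bool" where
  "meager_in X S \<longleftrightarrow> S \<subseteq> topspace X \<and>
     (\<exists>\<N>. countable \<N> \<and> (\<forall>N\<in>\<N>. nowhere_dense_in X N) \<and> S \<subseteq> \<Union>\<N>)"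

definition borel_sets_of :: "'a topology \<Rightarrow> 'a set set" where
  "borel_sets_of X = sigma_sets (topspace X) {U. openin X U}"

definition real_omega :: "(nat \<Rightarrow> real) topology" where
  "real_omega = product_topology (\<lambda>n. euclideanreal) UNIV"

definition functionally_borel :: "'a topology \<Rightarrow> 'a set \<Rightarrow> bool" where
  "functionally_borel X A \<longleftrightarrow>
     (\<exists>f B. continuous_map X real_omega f \<and> B \<in> borel_sets_of real_omega \<and>
            A = {x \<in> topspace X. f x \<in> B})"

definition Bo :: "'a topology \<Rightarrow> 'a set set" where
  "Bo X = borel_sets_of X"

definition Ba :: "'a topology \<Rightarrow> 'a set set" where
  "Ba X = {A. functionally_borel X A}"

definition meager_ideal :: "'a topology \<Rightarrow> 'a set set" where
  "meager_ideal X = {M. meager_in X M}"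

text \<open>\<open>\<A>\<^sup>\<plusminus>\<M>\<close>: smallest sigma-algebra (on the topspace) containing \<open>\<A> \<union> \<M>\<close>.\<close>
definition pm_sigma :: "'a topology \<Rightarrow> 'a set set \<Rightarrow> 'a set set \<Rightarrow> 'a set set" where
  "pm_sigma X \<A> \<M> = sigma_sets (topspace X) (\<A> \<union> \<M>)"

definition baire_property_sets :: "'a topology \<Rightarrow> 'a set set" where
  "baire_property_sets X = sigma_sets (topspace X) ({U. openin X U} \<union> meager_ideal X)"

end

theory Submission
  imports Defs
begin

text \<open>In a countably cellular space a maximal disjoint family of nonempty open sets is
  countable. Applied to the cozero sets inside an open set \<open>U\<close> of a completely regular space,
  it yields a countable union of cozero sets -- a functionally Borel set -- which is dense in
  \<open>U\<close>, so every open set is functionally Borel modulo a nowhere dense set. Taking complements,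
  every nowhere dense and hence every meager set lies in a meager functionally Borel set, and
  the two \<open>\<sigma>\<close>-algebras generated together with the meager sets coincide. Applied to the meager
  open sets, the same argument shows that their union is meager. As every Borel set is open
  modulo a meager set, the members of a disjoint family of nonmeager Borel sets then contain
  pairwise disjoint nonempty open sets modulo meager sets, and there are only countably many.\<close>

lemma nowhere_dense_in_subset:
  assumes "nowhere_dense_in X A" "B \<subseteq> A"
  shows "nowhere_dense_in X B"
proof -
  have "X interior_of (X closure_of B) \<subseteq> X interior_of (X closure_of A)"
    using assms(2) by (intro interior_of_mono closure_of_mono)
  with assms show ?thesis
    unfolding nowhere_dense_in_def by blast
qed

lemma nowhere_dense_in_closure_of:
  assumes "nowhere_dense_in X N"
  shows "nowhere_dense_in X (X closure_of N)"
  using assms unfolding nowhere_dense_in_def closure_of_closure_of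
  by (simp add: closure_of_subset_topspace)

lemma nowhere_dense_in_frontier_of_closedin:
  assumes "closedin X C"
  shows "nowhere_dense_in X (X frontier_of C)"
proof -
  have frontier: "X frontier_of C = C - X interior_of C"
    using assms by (simp add: frontier_of_def closure_of_closedin)
  have "X interior_of (C - X interior_of C) \<subseteq> X interior_of C"
    by (rule interior_of_mono) blast
  then have "X interior_of (X frontier_of C) = {}"
    using interior_of_subset[of X "C - X interior_of C"] unfolding frontier by blast
  then show ?thesis
    unfolding nowhere_dense_in_def
    by (simp add: closure_of_closedin closedin_frontier_of frontier_of_subset_topspace)
qed

lemma nowhere_dense_in_frontier_of_openin:
  assumes "openin X U"
  shows "nowhere_dense_in X (X frontier_of U)"
  using nowhere_dense_in_frontier_of_closedin[of X "topspace X - U"] assms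
  by (simp add: closedin_diff frontier_of_complement)

lemma meager_in_subset: "meager_in X A \<Longrightarrow> B \<subseteq> A \<Longrightarrow> meager_in X B"
  unfolding meager_in_def by (meson order_trans)

lemma meager_in_empty [simp]: "meager_in X {}"
  unfolding meager_in_def by auto

lemma nowhere_dense_imp_meager_in: "nowhere_dense_in X A \<Longrightarrow> meager_in X A"
  unfolding meager_in_def nowhere_dense_in_def
  by (intro conjI exI[of _ "{A}"]) (auto simp: nowhere_dense_in_def)

lemma meager_in_Union:
  assumes "countable \<A>" "\<And>A. A \<in> \<A> \<Longrightarrow> meager_in X A"
  shows "meager_in X (\<Union>\<A>)"
proof -
  have "\<forall>A\<in>\<A>. \<exists>\<N>. countable \<N> \<and> (\<forall>N\<in>\<N>. nowhere_dense_in X N) \<and> A \<subseteq> \<Union>\<N>"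
    using assms(2) unfolding meager_in_def by auto
  then obtain F where F: "\<And>A. A \<in> \<A> \<Longrightarrow>
      countable (F A) \<and> (\<forall>N\<in>F A. nowhere_dense_in X N) \<and> A \<subseteq> \<Union>(F A)"
    by metis
  have "countable (\<Union>A\<in>\<A>. F A)"
    using assms(1) F by (simp add: countable_UN)
  moreover have "\<forall>N\<in>(\<Union>A\<in>\<A>. F A). nowhere_dense_in X N"
    using F by simp
  moreover have "\<Union>\<A> \<subseteq> \<Union>(\<Union>A\<in>\<A>. F A)"
  proof (rule Union_least)
    fix A assume "A \<in> \<A>"
    with F[of A] show "A \<subseteq> \<Union>(\<Union>A\<in>\<A>. F A)"
      by blast
  qed
  moreover have "\<Union>\<A> \<subseteq> topspace X"
    using assms(2) unfolding meager_in_def by auto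
  ultimately show ?thesis
    unfolding meager_in_def by (intro conjI exI[of _ "\<Union>A\<in>\<A>. F A"])
qed

lemma meager_in_Un: "meager_in X A \<Longrightarrow> meager_in X B \<Longrightarrow> meager_in X (A \<union> B)"
  using meager_in_Union[of "{A, B}" X] by auto

lemma meager_in_closure_of_openin:
  assumes "openin X U" "meager_in X U"
  shows "meager_in X (X closure_of U)"
proof -
  have "X closure_of U \<subseteq> U \<union> X frontier_of U"
    using assms(1) by (auto simp: frontier_of_def interior_of_openin)
  then show ?thesis
    using assms by (meson meager_in_Un meager_in_subset nowhere_dense_imp_meager_in
        nowhere_dense_in_frontier_of_openin)
qed

subsection \<open>Countably cellular spaces\<close>

lemma countably_cellular_maximal_disjoint:
  assumes "countably_cellular X" "\<And>P. P \<in> \<P> \<Longrightarrow> openin X P \<and> P \<noteq> {}"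
  obtains \<C> where "\<C> \<subseteq> \<P>" "countable \<C>" "pairwise disjnt \<C>"
    "\<And>P. P \<in> \<P> \<Longrightarrow> \<exists>C\<in>\<C>. P \<inter> C \<noteq> {}"
proof -
  let ?S = "{\<C>. \<C> \<subseteq> \<P> \<and> pairwise disjnt \<C>}"
  have "\<Union>\<K> \<in> ?S" if "\<K> \<in> chains ?S" for \<K>
  proof -
    have "\<K> \<subseteq> ?S" "chain\<^sub>\<subseteq> \<K>"
      using that unfolding chains_def by auto
    then show ?thesis
      using pairwise_chain_Union[of \<K> disjnt] by auto
  qed
  then obtain \<C> where \<C>: "\<C> \<in> ?S" and max: "\<And>\<D>. \<D> \<in> ?S \<Longrightarrow> \<C> \<subseteq> \<D> \<Longrightarrow> \<D> = \<C>"
    using Zorn_Lemma[of ?S] by auto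
  have "countable \<C>"
    using assms \<C> unfolding countably_cellular_def by auto
  moreover have "\<exists>C\<in>\<C>. P \<inter> C \<noteq> {}" if P: "P \<in> \<P>" for P
  proof (rule ccontr)
    assume disj: "\<not> (\<exists>C\<in>\<C>. P \<inter> C \<noteq> {})"
    then have "insert P \<C> \<in> ?S"
      using \<C> P by (auto simp: pairwise_insert disjnt_def Int_commute)
    then have "P \<in> \<C>"
      using max[of "insert P \<C>"] by auto
    with disj assms(2)[OF P] show False
      by auto
  qed
  ultimately show ?thesis
    using \<C> by (intro that) auto
qed

lemma countably_cellular_indexed_disjoint:
  assumes "countably_cellular X" "\<And>i. i \<in> I \<Longrightarrow> openin X (V i) \<and> V i \<noteq> {}"
    and "\<And>i j. i \<in> I \<Longrightarrow> j \<in> I \<Longrightarrow> i \<noteq> j \<Longrightarrow> V i \<inter> V j = {}"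
  shows "countable I"
proof -
  have "inj_on V I"
  proof (rule inj_onI, rule ccontr)
    fix i j assume "i \<in> I" "j \<in> I" "V i = V j" "i \<noteq> j"
    then have "V i = {}"
      using assms(3)[of i j] by simp
    with assms(2)[of i] \<open>i \<in> I\<close> show False
      by simp
  qed
  moreover have "pairwise disjnt (V ` I)"
    using assms(3) by (auto simp: pairwise_def disjnt_def)
  then have "countable (V ` I)"
    using assms(1)[unfolded countably_cellular_def, rule_format, of "V ` I"] assms(2) by auto
  ultimately show ?thesis
    by (rule countable_image_inj_on[rotated])
qed

text \<open>\<open>\<P>\<close> is a \<open>\<pi>\<close>-base of the open set \<open>U\<close>.\<close>
lemma countably_cellular_dense_countable_subfamily:
  assumes "countably_cellular X" "openin X U" "\<And>P. P \<in> \<P> \<Longrightarrow> openin X P"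
    and "\<And>V. openin X V \<Longrightarrow> V \<subseteq> U \<Longrightarrow> V \<noteq> {} \<Longrightarrow> \<exists>P\<in>\<P>. P \<noteq> {} \<and> P \<subseteq> V"
  obtains \<C> where "\<C> \<subseteq> \<P>" "countable \<C>" "\<Union>\<C> \<subseteq> U" "U \<subseteq> X closure_of \<Union>\<C>"
proof -
  define \<Q> where "\<Q> = {P \<in> \<P>. P \<noteq> {} \<and> P \<subseteq> U}"
  obtain \<C> where \<C>: "\<C> \<subseteq> \<Q>" "countable \<C>" "pairwise disjnt \<C>"
    and meets: "\<And>P. P \<in> \<Q> \<Longrightarrow> \<exists>C\<in>\<C>. P \<inter> C \<noteq> {}"
  proof (rule countably_cellular_maximal_disjoint[OF assms(1)])
    show "openin X P \<and> P \<noteq> {}" if "P \<in> \<Q>" for P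
      using that assms(3) by (auto simp: \<Q>_def)
  qed (rule that)
  have "\<Union>\<C> \<subseteq> X closure_of \<Union>\<C>"
    using \<C>(1) assms(3) by (intro closure_of_subset) (auto simp: \<Q>_def dest: openin_subset)
  have "U - X closure_of \<Union>\<C> = {}"
  proof (rule ccontr)
    assume "U - X closure_of \<Union>\<C> \<noteq> {}"
    moreover have "openin X (U - X closure_of \<Union>\<C>)"
      using assms(2) by (simp add: openin_diff)
    ultimately obtain P where P: "P \<in> \<P>" "P \<noteq> {}" "P \<subseteq> U - X closure_of \<Union>\<C>"
      using assms(4) by (metis Diff_subset)
    then obtain C where "C \<in> \<C>" "P \<inter> C \<noteq> {}"
      using meets[of P] by (auto simp: \<Q>_def)
    with P(3) \<open>\<Union>\<C> \<subseteq> X closure_of \<Union>\<C>\<close> show False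
      by blast
  qed
  then show ?thesis
    using \<C>(1,2) by (intro that) (auto simp: \<Q>_def)
qed

lemma countably_cellular_meager_in_Union_meager_open:
  assumes "countably_cellular X"
  shows "meager_in X (\<Union>{U. openin X U \<and> meager_in X U})"
proof -
  define \<M> where "\<M> = {U. openin X U \<and> meager_in X U}"
  have opens: "openin X P" if "P \<in> \<M>" for P
    using that by (simp add: \<M>_def)
  have pi_base: "\<exists>P\<in>\<M>. P \<noteq> {} \<and> P \<subseteq> V" if V: "openin X V" "V \<subseteq> \<Union>\<M>" "V \<noteq> {}" for V
  proof -
    obtain U x where "U \<in> \<M>" "x \<in> V" "x \<in> U"
      using V(2,3) by blast
    then have "V \<inter> U \<in> \<M>"
      using V(1) meager_in_subset[of X U "V \<inter> U"] by (auto simp: \<M>_def)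
    with \<open>x \<in> V\<close> \<open>x \<in> U\<close> show ?thesis
      by (intro bexI[of _ "V \<inter> U"]) auto
  qed
  have "openin X (\<Union>\<M>)"
    using opens by (rule openin_Union)
  then obtain \<C> where \<C>: "\<C> \<subseteq> \<M>" "countable \<C>" "\<Union>\<C> \<subseteq> \<Union>\<M>" "\<Union>\<M> \<subseteq> X closure_of \<Union>\<C>"
    by (rule countably_cellular_dense_countable_subfamily[OF assms _ opens pi_base])
  have "meager_in X (\<Union>\<C>)"
    using \<C>(1,2) by (intro meager_in_Union) (auto simp: \<M>_def)
  moreover have "openin X (\<Union>\<C>)"
    using \<C>(1) opens by (intro openin_Union) auto
  ultimately have "meager_in X (X closure_of \<Union>\<C>)"
    by (rule meager_in_closure_of_openin[rotated])
  then show ?thesis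
    using meager_in_subset[OF _ \<C>(4)] by (simp add: \<M>_def)
qed

subsection \<open>Functionally Borel sets\<close>

lemma borel_sets_of_vimage_continuous_map:
  assumes f: "continuous_map X Y f" and "B \<in> borel_sets_of Y"
  shows "{x \<in> topspace X. f x \<in> B} \<in> borel_sets_of X"
  using assms(2) unfolding borel_sets_of_def
proof induct
  case (Basic U)
  then show ?case
    using openin_continuous_map_preimage[OF f] by (auto intro: sigma_sets.Basic)
next
  case Empty
  show ?case
    by (simp add: sigma_sets.Empty)
next
  case (Compl B)
  have "{x \<in> topspace X. f x \<in> topspace Y - B} = topspace X - {x \<in> topspace X. f x \<in> B}"
    using continuous_map_image_subset_topspace[OF f] by auto
  with Compl(2) show ?case
    by (simp add: sigma_sets.Compl)
next
  case (Union B)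
  have "{x \<in> topspace X. f x \<in> (\<Union>i. B i)} = (\<Union>i. {x \<in> topspace X. f x \<in> B i})"
    by auto
  with Union(2) show ?case
    by (simp add: sigma_sets.Union)
qed

lemma topspace_real_omega [simp]: "topspace real_omega = UNIV"
  by (simp add: real_omega_def)

lemma continuous_map_real_omega_iff:
  "continuous_map X real_omega f \<longleftrightarrow> (\<forall>n. continuous_map X euclideanreal (\<lambda>x. f x n))"
  by (simp add: real_omega_def continuous_map_componentwise_UNIV)

lemma continuous_map_real_omega_component:
  "continuous_map real_omega euclideanreal (\<lambda>y. y n)"
  unfolding real_omega_def by (rule continuous_map_product_projection) simp

lemma functionally_borel_subset_topspace: "functionally_borel X A \<Longrightarrow> A \<subseteq> topspace X"
  unfolding functionally_borel_def by blast

lemma functionally_borel_empty: "functionally_borel X {}"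
  unfolding functionally_borel_def borel_sets_of_def
  by (intro exI[of _ "\<lambda>x n. 0"] exI[of _ "{}"]) (simp add: sigma_sets.Empty)

lemma functionally_borel_complement:
  assumes "functionally_borel X A"
  shows "functionally_borel X (topspace X - A)"
proof -
  obtain f B where "continuous_map X real_omega f" "B \<in> borel_sets_of real_omega"
    and A: "A = {x \<in> topspace X. f x \<in> B}"
    using assms unfolding functionally_borel_def by blast
  moreover have "UNIV - B \<in> borel_sets_of real_omega"
    using \<open>B \<in> borel_sets_of real_omega\<close> unfolding borel_sets_of_def
    by (metis sigma_sets.Compl topspace_real_omega)
  moreover have "topspace X - A = {x \<in> topspace X. f x \<in> UNIV - B}"
    using A by auto
  ultimately show ?thesis
    unfolding functionally_borel_def by blast
qed

lemma functionally_borel_cozero: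
  assumes "continuous_map X euclideanreal g"
  shows "functionally_borel X {x \<in> topspace X. g x \<noteq> 0}"
proof -
  have "openin real_omega {y \<in> topspace real_omega. y 0 \<in> - {0}}"
    by (rule openin_continuous_map_preimage[OF continuous_map_real_omega_component]) auto
  then have "{y. y 0 \<noteq> 0} \<in> borel_sets_of real_omega"
    unfolding borel_sets_of_def by (auto intro: sigma_sets.Basic)
  moreover have "continuous_map X real_omega (\<lambda>x n. g x)"
    using assms by (simp add: continuous_map_real_omega_iff)
  ultimately show ?thesis
    unfolding functionally_borel_def by (intro exI conjI) auto
qed

text \<open>The countably many maps into \<open>\<real>^\<omega>\<close> are combined into one via the pairing \<open>prod_encode\<close>.\<close>
lemma functionally_borel_UN:
  assumes "\<And>n::nat. functionally_borel X (A n)"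
  shows "functionally_borel X (\<Union>n. A n)"
proof -
  obtain f B where f: "\<And>n. continuous_map X real_omega (f n)"
    and B: "\<And>n. B n \<in> borel_sets_of real_omega" and A: "\<And>n. A n = {x \<in> topspace X. f n x \<in> B n}"
    using assms unfolding functionally_borel_def by metis
  define F where "F x = (\<lambda>m. f (fst (prod_decode m)) x (snd (prod_decode m)))" for x
  define \<pi> where "\<pi> n y = (\<lambda>m. y (prod_encode (n, m)))" for n and y :: "nat \<Rightarrow> real"
  have "continuous_map X real_omega F"
    unfolding continuous_map_real_omega_iff F_def
    using continuous_map_compose[OF f continuous_map_real_omega_component]
    by (simp add: o_def)
  moreover have "continuous_map real_omega real_omega (\<pi> n)" for n
    unfolding continuous_map_real_omega_iff \<pi>_def
    by (simp add: continuous_map_real_omega_component)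
  then have "{y \<in> topspace real_omega. \<pi> n y \<in> B n} \<in> borel_sets_of real_omega" for n
    using borel_sets_of_vimage_continuous_map B by blast
  then have "(\<Union>n. {y \<in> topspace real_omega. \<pi> n y \<in> B n}) \<in> borel_sets_of real_omega"
    unfolding borel_sets_of_def by (rule sigma_sets.Union)
  moreover have "(\<Union>n. A n) = {x \<in> topspace X. F x \<in> (\<Union>n. {y \<in> topspace real_omega. \<pi> n y \<in> B n})}"
    unfolding A by (auto simp: F_def \<pi>_def)
  ultimately show ?thesis
    unfolding functionally_borel_def by blast
qed

lemma sigma_algebra_Ba: "sigma_algebra (topspace X) (Ba X)"
  unfolding sigma_algebra_iff2 Ba_def
  by (auto intro: functionally_borel_empty functionally_borel_complement functionally_borel_UN
      dest: functionally_borel_subset_topspace)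

lemma Ba_subset_Bo: "Ba X \<subseteq> Bo X"
  unfolding Ba_def Bo_def functionally_borel_def
  using borel_sets_of_vimage_continuous_map by blast

subsection \<open>Approximation by functionally Borel sets\<close>

lemma completely_regular_space_cozero_nbhd:
  assumes "completely_regular_space X" "openin X V" "x \<in> V"
  obtains g where "continuous_map X euclideanreal g"
    "x \<in> {y \<in> topspace X. g y \<noteq> 0}" "{y \<in> topspace X. g y \<noteq> 0} \<subseteq> V"
proof -
  obtain g where g: "continuous_map X euclideanreal g" "g x = 1" "g ` (topspace X - V) \<subseteq> {0}"
    using assms completely_regular_space_gen_alt'[of 1 0 X] by (metis zero_neq_one)
  moreover have "x \<in> topspace X"
    using assms(2,3) openin_subset by blast
  ultimately show ?thesis
    by (intro that[of g]) auto
qed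

lemma openin_cozero:
  assumes "continuous_map X euclideanreal g"
  shows "openin X {x \<in> topspace X. g x \<noteq> 0}"
  using openin_continuous_map_preimage[OF assms, of "- {0}"] by (simp add: open_Compl)

lemma openin_functionally_borel_dense_subset:
  assumes "completely_regular_space X" "countably_cellular X" "openin X U"
  obtains W where "W \<in> Ba X" "W \<subseteq> U" "nowhere_dense_in X (U - W)"
proof -
  define \<P> where "\<P> = (\<lambda>g. {y \<in> topspace X. g y \<noteq> 0}) ` {g. continuous_map X euclideanreal g}"
  have opens: "openin X P" if "P \<in> \<P>" for P
    using that openin_cozero unfolding \<P>_def by blast
  have pi_base: "\<exists>P\<in>\<P>. P \<noteq> {} \<and> P \<subseteq> V" if V: "openin X V" "V \<noteq> {}" for V
  proof -
    obtain x where "x \<in> V"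
      using V(2) by blast
    then obtain g where "continuous_map X euclideanreal g"
      "x \<in> {y \<in> topspace X. g y \<noteq> 0}" "{y \<in> topspace X. g y \<noteq> 0} \<subseteq> V"
      using completely_regular_space_cozero_nbhd[OF assms(1) V(1)] by blast
    then show ?thesis
      unfolding \<P>_def by (intro bexI[of _ "{y \<in> topspace X. g y \<noteq> 0}"]) auto
  qed
  obtain \<C> where \<C>: "\<C> \<subseteq> \<P>" "countable \<C>" "\<Union>\<C> \<subseteq> U" "U \<subseteq> X closure_of \<Union>\<C>"
    by (rule countably_cellular_dense_countable_subfamily[OF assms(2,3) opens pi_base])
  have "\<P> \<subseteq> Ba X"
    unfolding \<P>_def Ba_def by (auto intro: functionally_borel_cozero)
  then have "\<Union>\<C> \<in> Ba X"
    using \<C>(1) by (intro sigma_algebra.countable_Union[OF sigma_algebra_Ba \<C>(2)]) auto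
  moreover have "openin X (\<Union>\<C>)"
    using \<C>(1) opens by (intro openin_Union) auto
  then have "nowhere_dense_in X (X frontier_of \<Union>\<C>)" "U - \<Union>\<C> \<subseteq> X frontier_of \<Union>\<C>"
    using \<C>(4) by (simp_all add: nowhere_dense_in_frontier_of_openin)
      (auto simp: frontier_of_def interior_of_openin)
  ultimately show ?thesis
    using \<C>(3) nowhere_dense_in_subset by (intro that) auto
qed

lemma nowhere_dense_in_subset_Ba_meager:
  assumes "completely_regular_space X" "countably_cellular X" "nowhere_dense_in X N"
  obtains A where "A \<in> Ba X" "N \<subseteq> A" "meager_in X A"
proof -
  define U where "U = topspace X - X closure_of N"
  have "openin X U"
    unfolding U_def by (simp add: openin_diff)
  then obtain W where W: "W \<in> Ba X" "W \<subseteq> U" "nowhere_dense_in X (U - W)"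
    using openin_functionally_borel_dense_subset[OF assms(1,2)] by blast
  have "topspace X - W \<in> Ba X"
    using W(1) algebra.compl_sets[OF sigma_algebra.axioms(1)[OF sigma_algebra_Ba]] by blast
  moreover have "N \<subseteq> topspace X - W"
    using W(2) assms(3) closure_of_subset[of N X] unfolding U_def nowhere_dense_in_def by blast
  moreover have "meager_in X (X closure_of N \<union> (U - W))"
    using assms(3) W(3)
    by (simp add: meager_in_Un nowhere_dense_imp_meager_in nowhere_dense_in_closure_of)
  then have "meager_in X (topspace X - W)"
    by (rule meager_in_subset) (auto simp: U_def)
  ultimately show ?thesis
    using that by blast
qed

lemma meager_in_subset_Ba_meager:
  assumes "completely_regular_space X" "countably_cellular X" "meager_in X M"
  obtains A where "A \<in> Ba X" "M \<subseteq> A" "meager_in X A"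
proof -
  obtain \<N> where \<N>: "countable \<N>" "\<And>N. N \<in> \<N> \<Longrightarrow> nowhere_dense_in X N" "M \<subseteq> \<Union>\<N>"
    using assms(3) unfolding meager_in_def by blast
  have "\<exists>A. A \<in> Ba X \<and> N \<subseteq> A \<and> meager_in X A" if "N \<in> \<N>" for N
    using nowhere_dense_in_subset_Ba_meager[OF assms(1,2) \<N>(2)[OF that]] by blast
  then obtain F where F: "\<And>N. N \<in> \<N> \<Longrightarrow> F N \<in> Ba X \<and> N \<subseteq> F N \<and> meager_in X (F N)"
    by metis
  have "\<Union>(F ` \<N>) \<in> Ba X"
    using F by (intro sigma_algebra.countable_Union[OF sigma_algebra_Ba]) (auto simp: \<N>(1))
  moreover have "M \<subseteq> \<Union>(F ` \<N>)"
    using \<N>(3) F by blast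
  moreover have "meager_in X (\<Union>(F ` \<N>))"
    using F by (intro meager_in_Union) (auto simp: \<N>(1))
  ultimately show ?thesis
    using that by blast
qed

subsection \<open>The Baire property\<close>

lemma borel_sets_of_meager_sym_diff_openin:
  assumes "D \<in> borel_sets_of X"
  shows "\<exists>U. openin X U \<and> meager_in X (sym_diff D U)"
  using assms unfolding borel_sets_of_def
proof induct
  case (Basic D)
  then show ?case
    by auto
next
  case Empty
  show ?case
    by auto
next
  case (Compl D)
  then obtain U where U: "openin X U" "meager_in X (sym_diff D U)"
    by blast
  define V where "V = X interior_of (topspace X - U)"
  have "nowhere_dense_in X (X frontier_of (topspace X - U))"
    using U(1) by (simp add: nowhere_dense_in_frontier_of_closedin closedin_diff)
  then have "meager_in X (sym_diff D U \<union> X frontier_of (topspace X - U))"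
    using U(2) by (simp add: meager_in_Un nowhere_dense_imp_meager_in)
  moreover have "sym_diff (topspace X - D) V \<subseteq> sym_diff D U \<union> X frontier_of (topspace X - U)"
    using interior_of_subset[of X "topspace X - U"] U(1)
    by (auto simp: V_def frontier_of_def closure_of_closedin closedin_diff)
  ultimately have "meager_in X (sym_diff (topspace X - D) V)"
    by (rule meager_in_subset)
  moreover have "openin X V"
    by (simp add: V_def)
  ultimately show ?case
    by blast
next
  case (Union D)
  then obtain U where U: "\<And>i. openin X (U i)" "\<And>i. meager_in X (sym_diff (D i) (U i))"
    by metis
  have "meager_in X (\<Union>i. sym_diff (D i) (U i))"
    using U(2) by (intro meager_in_Union) auto
  moreover have "sym_diff (\<Union>i. D i) (\<Union>i. U i) \<subseteq> (\<Union>i. sym_diff (D i) (U i))"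
    by blast
  ultimately have "meager_in X (sym_diff (\<Union>i. D i) (\<Union>i. U i))"
    by (rule meager_in_subset)
  moreover have "openin X (\<Union>i. U i)"
    using U(1) by (intro openin_Union) auto
  ultimately show ?case
    by blast
qed

lemma countably_cellular_countable_disjoint_nonmeager:
  assumes ccc: "countably_cellular X" and "pairwise disjnt \<D>"
    and nonmeager: "\<And>D. D \<in> \<D> \<Longrightarrow> \<not> meager_in X D"
    and approx: "\<And>D. D \<in> \<D> \<Longrightarrow> \<exists>U. openin X U \<and> meager_in X (sym_diff D U)"
  shows "countable \<D>"
proof -
  define G where "G = \<Union>{U. openin X U \<and> meager_in X U}"
  define K where "K = X closure_of G"
  have "meager_in X K"
    unfolding K_def G_def using countably_cellular_meager_in_Union_meager_open[OF ccc]
    by (intro meager_in_closure_of_openin) auto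
  obtain U where U: "\<And>D. D \<in> \<D> \<Longrightarrow> openin X (U D) \<and> meager_in X (sym_diff D (U D))"
    using approx by metis
  define V where "V D = U D - K" for D
  have V_open: "openin X (V D)" if "D \<in> \<D>" for D
    using U[OF that] by (simp add: V_def K_def openin_diff)
  have V_nonempty: "V D \<noteq> {}" if "D \<in> \<D>" for D
  proof
    assume "V D = {}"
    then have "D \<subseteq> K \<union> sym_diff D (U D)"
      by (auto simp: V_def)
    moreover have "meager_in X (K \<union> sym_diff D (U D))"
      using U[OF that] \<open>meager_in X K\<close> by (simp add: meager_in_Un)
    ultimately show False
      using nonmeager[OF that] meager_in_subset by blast
  qed
  \<comment> \<open>an overlap would be a nonempty meager open set, hence inside \<open>G\<close>, which \<open>V D\<close> avoids\<close>
  have V_disjoint: "V D \<inter> V D' = {}" if "D \<in> \<D>" "D' \<in> \<D>" "D \<noteq> D'" for D D'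
  proof -
    have "V D \<inter> V D' \<subseteq> sym_diff D (U D) \<union> sym_diff D' (U D')"
      using \<open>pairwise disjnt \<D>\<close> that by (auto simp: V_def pairwise_def disjnt_def)
    then have "meager_in X (V D \<inter> V D')"
      using U that by (meson meager_in_Un meager_in_subset)
    moreover have "openin X (V D \<inter> V D')"
      using V_open that by blast
    ultimately have "V D \<inter> V D' \<subseteq> K"
      using closure_of_subset[of G X] openin_subset unfolding K_def G_def by blast
    then show ?thesis
      by (auto simp: V_def)
  qed
  show ?thesis
    by (rule countably_cellular_indexed_disjoint[of X \<D> V, OF ccc])
      (simp_all add: V_open V_nonempty V_disjoint)
qed

lemma pm_sigma_Bo_meager_eq_baire_property_sets:
  "pm_sigma X (Bo X) (meager_ideal X) = baire_property_sets X"
  unfolding pm_sigma_def baire_property_sets_def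
proof (rule sigma_sets_eqI)
  show "A \<in> sigma_sets (topspace X) ({U. openin X U} \<union> meager_ideal X)"
    if "A \<in> Bo X \<union> meager_ideal X" for A
    using that sigma_sets_subseteq[of "{U. openin X U}" "{U. openin X U} \<union> meager_ideal X"]
    by (auto simp: Bo_def borel_sets_of_def)
  show "A \<in> sigma_sets (topspace X) (Bo X \<union> meager_ideal X)"
    if "A \<in> {U. openin X U} \<union> meager_ideal X" for A
    using that by (auto simp: Bo_def borel_sets_of_def)
qed

lemma pm_sigma_Bo_meager_eq_Ba_meager:
  assumes "completely_regular_space X" "countably_cellular X"
  shows "pm_sigma X (Bo X) (meager_ideal X) = pm_sigma X (Ba X) (meager_ideal X)"
  unfolding pm_sigma_def
proof (rule sigma_sets_eqI)
  let ?\<Sigma> = "sigma_sets (topspace X) (Ba X \<union> meager_ideal X)"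
  have "U \<in> ?\<Sigma>" if U: "openin X U" for U
  proof -
    obtain W where W: "W \<in> Ba X" "W \<subseteq> U" "nowhere_dense_in X (U - W)"
      using openin_functionally_borel_dense_subset[OF assms U] by blast
    then have "W \<union> (U - W) \<in> ?\<Sigma>"
      by (intro sigma_sets_Un) (auto simp: meager_ideal_def nowhere_dense_imp_meager_in)
    with W(2) show ?thesis
      by (simp add: Un_absorb1 Un_Diff_cancel)
  qed
  then have "Bo X \<subseteq> ?\<Sigma>"
    unfolding Bo_def borel_sets_of_def by (intro sigma_sets_mono) auto
  then show "A \<in> ?\<Sigma>" if "A \<in> Bo X \<union> meager_ideal X" for A
    using that by auto
  show "A \<in> sigma_sets (topspace X) (Bo X \<union> meager_ideal X)"
    if "A \<in> Ba X \<union> meager_ideal X" for A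
    using that Ba_subset_Bo by auto
qed

theorem lemma7p1:
  fixes X :: "'a topology"
  assumes "tychonoff_space X" and "countably_cellular X"
  shows "(\<forall>M. meager_in X M \<longrightarrow>
            (\<exists>A. M \<subseteq> A \<and> meager_in X A \<and> functionally_borel X A))
       \<and> (\<forall>\<D>. (\<forall>D\<in>\<D>. D \<in> Bo X \<and> \<not> meager_in X D) \<and> pairwise disjnt \<D>
                \<longrightarrow> countable \<D>)
       \<and> pm_sigma X (Bo X) (meager_ideal X) = pm_sigma X (Ba X) (meager_ideal X)
       \<and> pm_sigma X (Bo X) (meager_ideal X) = baire_property_sets X"
proof (intro conjI allI impI)
  have cr: "completely_regular_space X"
    using assms(1) by (simp add: tychonoff_space_def)
  show "\<exists>A. M \<subseteq> A \<and> meager_in X A \<and> functionally_borel X A" if "meager_in X M" for M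
    using meager_in_subset_Ba_meager[OF cr assms(2) that] by (auto simp: Ba_def)
  show "countable \<D>" if "(\<forall>D\<in>\<D>. D \<in> Bo X \<and> \<not> meager_in X D) \<and> pairwise disjnt \<D>" for \<D>
    using that borel_sets_of_meager_sym_diff_openin
    by (intro countably_cellular_countable_disjoint_nonmeager[OF assms(2)]) (auto simp: Bo_def)
  show "pm_sigma X (Bo X) (meager_ideal X) = pm_sigma X (Ba X) (meager_ideal X)"
    by (rule pm_sigma_Bo_meager_eq_Ba_meager[OF cr assms(2)])
  show "pm_sigma X (Bo X) (meager_ideal X) = baire_property_sets X"
    by (rule pm_sigma_Bo_meager_eq_baire_property_sets)
qed

end
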